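(* Let $C\subseteq(\mathbb{N}\cup\{\infty\})^d$ be semi-linear and $D\subseteq\{1,\dots,d\}$. Let $C_D\subseteq\mathbb{N}^d$ be the set obtained from $C$ by (1) removing every vector $(v_1,\dots,v_d)$ with $v_i=\infty$ for some $i\notin D$, and then (2) as long as the set contains a vector $(v_1,\dots,v_d)$ with $v_i=\infty$ for some $i$, replacing it by all vectors $(v_1,\dots,v_{i-1},z,v_{i+1},\dots,v_d)$ with $z\in\mathbb{N}$. (Equivalently, $C_D$ is the set of $\mathbf{u}\in\mathbb{N}^d$ for which there is $\mathbf{v}\in C$ with $v_i=\infty$ only for $i\in D$ and $u_i=v_i$ whenever $v_i\neq\infty$.) Then $C_D$ is semi-linear.
   Context: A linear set over $(\mathbb{N}\cup\{\infty\})^d$ is a set $\{b_0+b_1z_1+\dots+b_\ell z_\ell\mid z_1,\dots,z_\ell\in\mathbb{N}\}$ with $b_0,\dots,b_\ell\in(\mathbb{N}\cup\{\infty\})^d$, with componentwise arithmetic where $z+\infty=\infty+z=\infty+\infty=\infty$, $z\cdot\infty=\infty\cdot z=\infty$ for $z>0$, and $0\cdot\infty=\infty\cdot0=0$. A semi-linear set is a finite union of linear sets; for subsets of $\mathbb{N}^d$ this means all $b_j\in\mathbb{N}^d$. *)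

theory Defs
  imports Main "HOL-Library.Extended_Nat"
begin

(* Vectors in (N \<union> {\<infinity>})^d are functions nat \<Rightarrow> enat, components 0..d-1,
   and identically 0 at indices \<ge> d.  enat arithmetic matches the paper:
   x + \<infinity> = \<infinity>, 0 * \<infinity> = 0, n * \<infinity> = \<infinity> for n > 0. *)

definition linear_set_enat :: "nat \<Rightarrow> (nat \<Rightarrow> enat) set \<Rightarrow> bool" where
  "linear_set_enat d S \<longleftrightarrow>
     (\<exists>b0 bs. (\<forall>i\<ge>d. b0 i = 0) \<and> (\<forall>b\<in>set bs. \<forall>i\<ge>d. b i = 0) \<and>
        S = {(\<lambda>i. b0 i + (\<Sum>j<length bs. of_nat (z j) * (bs ! j) i)) | z :: nat \<Rightarrow> nat. True})"

definition semilinear_enat :: "nat \<Rightarrow> (nat \<Rightarrow> enat) set \<Rightarrow> bool" where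
  "semilinear_enat d S \<longleftrightarrow>
     (\<exists>Ls. finite Ls \<and> (\<forall>L\<in>Ls. linear_set_enat d L) \<and> S = \<Union>Ls)"

definition linear_set_nat :: "nat \<Rightarrow> (nat \<Rightarrow> nat) set \<Rightarrow> bool" where
  "linear_set_nat d S \<longleftrightarrow>
     (\<exists>b0 bs. (\<forall>i\<ge>d. b0 i = 0) \<and> (\<forall>b\<in>set bs. \<forall>i\<ge>d. b i = 0) \<and>
        S = {(\<lambda>i. b0 i + (\<Sum>j<length bs. z j * (bs ! j) i)) | z :: nat \<Rightarrow> nat. True})"

definition semilinear_nat :: "nat \<Rightarrow> (nat \<Rightarrow> nat) set \<Rightarrow> bool" where
  "semilinear_nat d S \<longleftrightarrow>
     (\<exists>Ls. finite Ls \<and> (\<forall>L\<in>Ls. linear_set_nat d L) \<and> S = \<Union>Ls)"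

definition restrict_inf :: "nat \<Rightarrow> (nat \<Rightarrow> enat) set \<Rightarrow> nat set \<Rightarrow> (nat \<Rightarrow> nat) set" where
  "restrict_inf d C D = {u. (\<forall>i\<ge>d. u i = 0) \<and>
     (\<exists>v\<in>C. (\<forall>i. v i = \<infinity> \<longrightarrow> i \<in> D) \<and> (\<forall>i. v i \<noteq> \<infinity> \<longrightarrow> v i = enat (u i)))}"

end

theory Submission imports Defs begin

text \<open>
  Semi-linear sets are finite unions of linear sets and \<open>restrict_inf\<close> commutes with unions,
  so it suffices to treat one linear set \<open>L = {b\<^sub>0 + (\<Sum>j. z\<^sub>j b\<^sub>j)}\<close>. Split its elements according to
  the support \<open>P = {j. z\<^sub>j > 0}\<close> of the coefficients: since multiplication by a positive natural
  preserves \<open>\<infinity>\<close>, the set of coordinates where \<open>b\<^sub>0 + (\<Sum>j. z\<^sub>j b\<^sub>j)\<close> is infinite depends on \<open>P\<close> only.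
  If these coordinates lie in \<open>D\<close>, the vectors contributed by \<open>P\<close> are exactly those that are
  arbitrary on them and equal to \<open>(b\<^sub>0 + (\<Sum>j\<in>P. b\<^sub>j)) + (\<Sum>j\<in>P. y\<^sub>j b\<^sub>j)\<close> with \<open>y\<^sub>j = z\<^sub>j - 1\<close>
  elsewhere; this is a linear set whose periods are the finite parts of the \<open>b\<^sub>j\<close>, \<open>j \<in> P\<close>,
  together with the unit vectors of the infinite coordinates.
\<close>

lemma sum_enat_eq_infinity_iff:
  "finite A \<Longrightarrow> sum f A = (\<infinity>::enat) \<longleftrightarrow> (\<exists>a\<in>A. f a = \<infinity>)"
  by (induction A rule: finite_induct) (auto simp: plus_eq_infty_iff_enat)

lemma sum_enat: "(\<Sum>a\<in>A. enat (f a)) = enat (sum f A)"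
  by (induction A rule: infinite_finite_induct) (auto simp: zero_enat_def)

lemma linear_set_nat_iff_range:
  "linear_set_nat d S \<longleftrightarrow>
     (\<exists>b0 bs. (\<forall>i\<ge>d. b0 i = 0) \<and> (\<forall>b\<in>set bs. \<forall>i\<ge>d. b i = 0) \<and>
        S = range (\<lambda>z i. b0 i + (\<Sum>j<length bs. z j * (bs ! j) i)))"
proof -
  have "{(\<lambda>i. b0 i + (\<Sum>j<length bs. z j * (bs ! j) i)) | z. True} =
        range (\<lambda>z i. b0 i + (\<Sum>j<length bs. z j * (bs ! j) i))" for b0 :: "nat \<Rightarrow> nat" and bs
    by blast
  then show ?thesis unfolding linear_set_nat_def by simp
qed

lemma linear_set_nat_indexed:
  fixes J :: "'a set" and g :: "'a \<Rightarrow> nat \<Rightarrow> nat"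
  assumes "finite J" "\<forall>i\<ge>d. b i = 0" "\<forall>j\<in>J. \<forall>i\<ge>d. g j i = 0"
  shows "linear_set_nat d (range (\<lambda>y i. b i + (\<Sum>j\<in>J. y j * g j i)))"
proof -
  obtain xs where xs: "set xs = J" "distinct xs"
    using finite_distinct_list[OF assms(1)] by blast
  have bij: "bij_betw ((!) xs) {..<length xs} J"
    using bij_betw_nth xs by blast
  have reindex: "(\<Sum>k<length xs. y (xs ! k) * g (xs ! k) i) = (\<Sum>j\<in>J. y j * g j i)" for y i
    using sum.reindex_bij_betw[OF bij, of "\<lambda>j. y j * g j i"] by simp
  define pos where "pos = inv_into {..<length xs} ((!) xs)"
  have pos: "pos (xs ! k) = k" if "k < length xs" for k
    unfolding pos_def using bij that by (simp add: bij_betw_def inv_into_f_f)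
  have "range (\<lambda>y i. b i + (\<Sum>j\<in>J. y j * g j i)) =
        range (\<lambda>z i. b i + (\<Sum>k<length (map g xs). z k * (map g xs ! k) i))"
  proof (intro equalityI subsetI)
    fix u assume "u \<in> range (\<lambda>y i. b i + (\<Sum>j\<in>J. y j * g j i))"
    then obtain y where "u = (\<lambda>i. b i + (\<Sum>j\<in>J. y j * g j i))" by blast
    then have "u = (\<lambda>i. b i + (\<Sum>k<length (map g xs). y (xs ! k) * (map g xs ! k) i))"
      using reindex by simp
    then show "u \<in> range (\<lambda>z i. b i + (\<Sum>k<length (map g xs). z k * (map g xs ! k) i))"
      by (intro range_eqI[where x = "\<lambda>k. y (xs ! k)"]) simp
  next
    fix u assume "u \<in> range (\<lambda>z i. b i + (\<Sum>k<length (map g xs). z k * (map g xs ! k) i))"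
    then obtain z where u: "u = (\<lambda>i. b i + (\<Sum>k<length (map g xs). z k * (map g xs ! k) i))"
      by blast
    have "(\<Sum>k<length (map g xs). z k * (map g xs ! k) i) =
          (\<Sum>k<length xs. (z \<circ> pos) (xs ! k) * g (xs ! k) i)" for i
      by (rule sum.cong) (auto simp: pos)
    then have "u = (\<lambda>i. b i + (\<Sum>j\<in>J. (z \<circ> pos) j * g j i))"
      unfolding u using reindex by presburger
    then show "u \<in> range (\<lambda>y i. b i + (\<Sum>j\<in>J. y j * g j i))"
      by (intro range_eqI[where x = "z \<circ> pos"]) simp
  qed
  then show ?thesis
    unfolding linear_set_nat_iff_range using assms xs
    by (intro exI[of _ b] exI[of _ "map g xs"]) auto
qed

lemma linear_set_nat_free_coords:
  fixes J :: "'a set" and g :: "'a \<Rightarrow> nat \<Rightarrow> nat"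
  assumes J: "finite J" and M: "M \<subseteq> {..<d}"
    and b: "\<forall>i\<ge>d. b i = 0" and g: "\<forall>j\<in>J. \<forall>i\<ge>d. g j i = 0"
  shows "linear_set_nat d
           {u. (\<forall>i\<ge>d. u i = 0) \<and> (\<exists>y. \<forall>i. i \<notin> M \<longrightarrow> u i = b i + (\<Sum>j\<in>J. y j * g j i))}"
proof -
  define b' where "b' i = (if i \<in> M then 0 else b i)" for i
  define g' where "g' k i = (case k of Inl j \<Rightarrow> if i \<in> M then 0 else g j i
                                    | Inr m \<Rightarrow> if i = m then 1 else 0)" for k i
  have finM: "finite M" using M finite_subset by blast
  have comb: "b' i + (\<Sum>k\<in>J <+> M. y k * g' k i) =
              (if i \<in> M then y (Inr i) else b i + (\<Sum>j\<in>J. y (Inl j) * g j i))" for y i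
    using finM by (simp add: sum.Plus[OF J finM] b'_def g'_def if_distrib[of "\<lambda>x. _ * x"]
        sum.delta' cong: if_cong)
  have "{u. (\<forall>i\<ge>d. u i = 0) \<and> (\<exists>y. \<forall>i. i \<notin> M \<longrightarrow> u i = b i + (\<Sum>j\<in>J. y j * g j i))} =
        range (\<lambda>y i. b' i + (\<Sum>k\<in>J <+> M. y k * g' k i))"
  proof (intro equalityI subsetI)
    fix u assume "u \<in> {u. (\<forall>i\<ge>d. u i = 0) \<and> (\<exists>y. \<forall>i. i \<notin> M \<longrightarrow> u i = b i + (\<Sum>j\<in>J. y j * g j i))}"
    then obtain y where "\<forall>i. i \<notin> M \<longrightarrow> u i = b i + (\<Sum>j\<in>J. y j * g j i)" by blast
    then have "u = (\<lambda>i. b' i + (\<Sum>k\<in>J <+> M. case_sum y u k * g' k i))"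
      by (auto simp: comb)
    then show "u \<in> range (\<lambda>y i. b' i + (\<Sum>k\<in>J <+> M. y k * g' k i))"
      by (intro range_eqI[where x = "case_sum y u"]) simp
  next
    fix u assume "u \<in> range (\<lambda>y i. b' i + (\<Sum>k\<in>J <+> M. y k * g' k i))"
    then obtain y where u: "u = (\<lambda>i. b' i + (\<Sum>k\<in>J <+> M. y k * g' k i))" by blast
    have "\<forall>i. i \<notin> M \<longrightarrow> u i = b i + (\<Sum>j\<in>J. (y \<circ> Inl) j * g j i)"
      by (simp add: u comb)
    moreover have "\<forall>i\<ge>d. u i = 0"
      using M b g by (auto simp: u comb)
    ultimately show "u \<in> {u. (\<forall>i\<ge>d. u i = 0) \<and> (\<exists>y. \<forall>i. i \<notin> M \<longrightarrow> u i = b i + (\<Sum>j\<in>J. y j * g j i))}"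
      by blast
  qed
  moreover have "linear_set_nat d (range (\<lambda>y i. b' i + (\<Sum>k\<in>J <+> M. y k * g' k i)))"
    using J finM M b g by (intro linear_set_nat_indexed) (auto simp: b'_def g'_def split: sum.split)
  ultimately show ?thesis by simp
qed

lemma semilinear_nat_if_linear: "linear_set_nat d S \<Longrightarrow> semilinear_nat d S"
  unfolding semilinear_nat_def by (intro exI[of _ "{S}"]) auto

lemma semilinear_nat_UN:
  assumes "finite A" "\<And>a. a \<in> A \<Longrightarrow> semilinear_nat d (S a)"
  shows "semilinear_nat d (\<Union>a\<in>A. S a)"
proof -
  obtain Ls where "\<forall>a\<in>A. finite (Ls a) \<and> (\<forall>L\<in>Ls a. linear_set_nat d L) \<and> S a = \<Union>(Ls a)"
    using assms(2) unfolding semilinear_nat_def by metis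
  then show ?thesis
    unfolding semilinear_nat_def using assms(1) by (intro exI[of _ "\<Union>(Ls ` A)"]) auto
qed

definition enat_lincomb :: "(nat \<Rightarrow> enat) \<Rightarrow> (nat \<Rightarrow> enat) list \<Rightarrow> (nat \<Rightarrow> nat) \<Rightarrow> nat \<Rightarrow> enat" where
  "enat_lincomb b0 bs z = (\<lambda>i. b0 i + (\<Sum>j<length bs. of_nat (z j) * (bs ! j) i))"

definition lincomb_support :: "(nat \<Rightarrow> enat) list \<Rightarrow> (nat \<Rightarrow> nat) \<Rightarrow> nat set" where
  "lincomb_support bs z = {j. j < length bs \<and> 0 < z j}"

definition infinite_coords :: "(nat \<Rightarrow> enat) \<Rightarrow> (nat \<Rightarrow> enat) list \<Rightarrow> nat set \<Rightarrow> nat set" where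
  "infinite_coords b0 bs P = {i. b0 i = \<infinity> \<or> (\<exists>j\<in>P. (bs ! j) i = \<infinity>)}"

lemma linear_set_enat_iff_range_enat_lincomb:
  "linear_set_enat d L \<longleftrightarrow>
     (\<exists>b0 bs. (\<forall>i\<ge>d. b0 i = 0) \<and> (\<forall>b\<in>set bs. \<forall>i\<ge>d. b i = 0) \<and> L = range (enat_lincomb b0 bs))"
proof -
  have "{(\<lambda>i. b0 i + (\<Sum>j<length bs. of_nat (z j) * (bs ! j) i)) | z. True} = range (enat_lincomb b0 bs)"
    for b0 bs
    unfolding enat_lincomb_def by blast
  then show ?thesis unfolding linear_set_enat_def by simp
qed

lemma enat_lincomb_eq_infinity_iff:
  "enat_lincomb b0 bs z i = \<infinity> \<longleftrightarrow> i \<in> infinite_coords b0 bs (lincomb_support bs z)"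
proof -
  have "(\<Sum>j<length bs. of_nat (z j) * (bs ! j) i) = \<infinity> \<longleftrightarrow>
        (\<exists>j<length bs. of_nat (z j) * (bs ! j) i = \<infinity>)"
    by (auto simp: sum_enat_eq_infinity_iff)
  also have "\<dots> \<longleftrightarrow> (\<exists>j\<in>lincomb_support bs z. (bs ! j) i = \<infinity>)"
    by (auto simp: imult_is_infinity of_nat_eq_enat lincomb_support_def zero_enat_def)
  finally show ?thesis
    by (simp add: enat_lincomb_def infinite_coords_def plus_eq_infty_iff_enat)
qed

lemma enat_lincomb_finite:
  assumes "i \<notin> infinite_coords b0 bs (lincomb_support bs z)"
  shows "enat_lincomb b0 bs z i =
           enat (the_enat (b0 i) + (\<Sum>j\<in>lincomb_support bs z. z j * the_enat ((bs ! j) i)))"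
proof -
  have "(\<Sum>j<length bs. of_nat (z j) * (bs ! j) i) = (\<Sum>j\<in>lincomb_support bs z. of_nat (z j) * (bs ! j) i)"
    by (rule sum.mono_neutral_right) (auto simp: lincomb_support_def)
  also have "\<dots> = (\<Sum>j\<in>lincomb_support bs z. enat (z j * the_enat ((bs ! j) i)))"
    using assms by (intro sum.cong) (auto simp: infinite_coords_def of_nat_eq_enat)
  finally show ?thesis
    using assms by (auto simp: enat_lincomb_def infinite_coords_def sum_enat)
qed

lemma infinite_coords_subset:
  assumes "\<forall>i\<ge>d. b0 i = 0" "\<forall>b\<in>set bs. \<forall>i\<ge>d. b i = 0" "P \<subseteq> {..<length bs}"
  shows "infinite_coords b0 bs P \<subseteq> {..<d}"
proof
  fix i assume i: "i \<in> infinite_coords b0 bs P"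
  show "i \<in> {..<d}"
  proof (rule ccontr)
    assume "i \<notin> {..<d}"
    then have "d \<le> i" by simp
    have "b0 i = 0"
      using assms(1) \<open>d \<le> i\<close> by simp
    moreover have "(bs ! j) i = 0" if "j \<in> P" for j
      using assms(2,3) that nth_mem[of j bs] \<open>d \<le> i\<close> by auto
    ultimately show False using i by (auto simp: infinite_coords_def)
  qed
qed

lemma restrict_inf_range_enat_lincomb:
  "restrict_inf d (range (enat_lincomb b0 bs)) D =
     (\<Union>P \<in> {P. P \<subseteq> {..<length bs} \<and> infinite_coords b0 bs P \<subseteq> D}.
        {u. (\<forall>i\<ge>d. u i = 0) \<and> (\<exists>y. \<forall>i. i \<notin> infinite_coords b0 bs P \<longrightarrow>
              u i = the_enat (b0 i) + (\<Sum>j\<in>P. (y j + 1) * the_enat ((bs ! j) i)))})"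
  (is "?R = (\<Union>P \<in> ?Ps. ?S P)")
proof (intro equalityI subsetI)
  fix u assume "u \<in> ?R"
  then obtain z where u0: "\<forall>i\<ge>d. u i = 0"
    and inf: "\<forall>i. enat_lincomb b0 bs z i = \<infinity> \<longrightarrow> i \<in> D"
    and fin: "\<forall>i. enat_lincomb b0 bs z i \<noteq> \<infinity> \<longrightarrow> enat_lincomb b0 bs z i = enat (u i)"
    unfolding restrict_inf_def by auto
  define P where "P = lincomb_support bs z"
  have "P \<in> ?Ps"
    using inf by (auto simp: P_def lincomb_support_def enat_lincomb_eq_infinity_iff)
  moreover have "u \<in> ?S P"
  proof -
    have "u i = the_enat (b0 i) + (\<Sum>j\<in>P. (z j - 1 + 1) * the_enat ((bs ! j) i))"
      if "i \<notin> infinite_coords b0 bs P" for i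
    proof -
      have "(\<Sum>j\<in>P. (z j - 1 + 1) * the_enat ((bs ! j) i)) = (\<Sum>j\<in>P. z j * the_enat ((bs ! j) i))"
        by (intro sum.cong) (auto simp: P_def lincomb_support_def)
      moreover have "enat_lincomb b0 bs z i = enat (u i)"
        using that fin by (simp add: enat_lincomb_eq_infinity_iff P_def)
      ultimately show ?thesis
        using that enat_lincomb_finite[of i b0 bs z] by (simp add: P_def)
    qed
    then show ?thesis using u0 by (intro CollectI conjI exI[of _ "\<lambda>j. z j - 1"]) auto
  qed
  ultimately show "u \<in> (\<Union>P \<in> ?Ps. ?S P)" by blast
next
  fix u assume "u \<in> (\<Union>P \<in> ?Ps. ?S P)"
  then obtain P y where P: "P \<subseteq> {..<length bs}" "infinite_coords b0 bs P \<subseteq> D"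
    and u0: "\<forall>i\<ge>d. u i = 0"
    and u: "\<forall>i. i \<notin> infinite_coords b0 bs P \<longrightarrow>
              u i = the_enat (b0 i) + (\<Sum>j\<in>P. (y j + 1) * the_enat ((bs ! j) i))"
    by blast
  define z where "z j = (if j \<in> P then y j + 1 else 0)" for j
  have supp: "lincomb_support bs z = P"
    using P by (auto simp: lincomb_support_def z_def)
  have "enat_lincomb b0 bs z i = enat (u i)" if "enat_lincomb b0 bs z i \<noteq> \<infinity>" for i
  proof -
    have i: "i \<notin> infinite_coords b0 bs P"
      using that by (simp add: enat_lincomb_eq_infinity_iff supp)
    have "(\<Sum>j\<in>P. z j * the_enat ((bs ! j) i)) = (\<Sum>j\<in>P. (y j + 1) * the_enat ((bs ! j) i))"
      by (intro sum.cong) (auto simp: z_def)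
    then show ?thesis
      using enat_lincomb_finite[of i b0 bs z] i u by (simp add: supp)
  qed
  moreover have "enat_lincomb b0 bs z i = \<infinity> \<Longrightarrow> i \<in> D" for i
    using P by (auto simp: enat_lincomb_eq_infinity_iff supp)
  ultimately show "u \<in> ?R"
    unfolding restrict_inf_def using u0 by (intro CollectI conjI bexI[of _ "enat_lincomb b0 bs z"]) auto
qed

lemma semilinear_nat_restrict_inf_linear:
  assumes "linear_set_enat d L"
  shows "semilinear_nat d (restrict_inf d L D)"
proof -
  obtain b0 bs where b0: "\<forall>i\<ge>d. b0 i = 0" and bs: "\<forall>b\<in>set bs. \<forall>i\<ge>d. b i = 0"
    and L: "L = range (enat_lincomb b0 bs)"
    using assms unfolding linear_set_enat_iff_range_enat_lincomb by blast
  have bs_nth: "(bs ! j) i = 0" if "j < length bs" "d \<le> i" for i j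
    using bs that by simp
  have "linear_set_nat d
          {u. (\<forall>i\<ge>d. u i = 0) \<and> (\<exists>y. \<forall>i. i \<notin> infinite_coords b0 bs P \<longrightarrow>
                u i = the_enat (b0 i) + (\<Sum>j\<in>P. (y j + 1) * the_enat ((bs ! j) i)))}"
    if P: "P \<subseteq> {..<length bs}" for P
  proof -
    have coeff0: "the_enat ((bs ! j) i) = 0" if "j \<in> P" "d \<le> i" for j i
      using bs_nth[of j i] P that by (auto simp: zero_enat_def)
    have base0: "the_enat (b0 i) + (\<Sum>j\<in>P. the_enat ((bs ! j) i)) = 0" if "d \<le> i" for i
      using b0 that coeff0 by (simp add: zero_enat_def)
    have "linear_set_nat d
          {u. (\<forall>i\<ge>d. u i = 0) \<and> (\<exists>y. \<forall>i. i \<notin> infinite_coords b0 bs P \<longrightarrow>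
                u i = (the_enat (b0 i) + (\<Sum>j\<in>P. the_enat ((bs ! j) i))) +
                      (\<Sum>j\<in>P. y j * the_enat ((bs ! j) i)))}"
      using coeff0 base0
      by (intro linear_set_nat_free_coords finite_subset[OF P] infinite_coords_subset[OF b0 bs P])
         auto
    moreover have "(\<Sum>j\<in>P. (y j + 1) * the_enat ((bs ! j) i)) =
          (\<Sum>j\<in>P. the_enat ((bs ! j) i)) + (\<Sum>j\<in>P. y j * the_enat ((bs ! j) i))" for y i
      by (simp add: sum.distrib algebra_simps)
    ultimately show ?thesis by (simp add: add.assoc)
  qed
  then show ?thesis
    unfolding L restrict_inf_range_enat_lincomb
    by (intro semilinear_nat_UN semilinear_nat_if_linear) auto
qed

lemma restrict_inf_Union: "restrict_inf d (\<Union>Ls) D = (\<Union>L\<in>Ls. restrict_inf d L D)"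
  unfolding restrict_inf_def by blast

theorem lemma6:
  fixes d :: nat and C :: "(nat \<Rightarrow> enat) set" and D :: "nat set"
  assumes "semilinear_enat d C"
    and "D \<subseteq> {..<d}"
  shows "semilinear_nat d (restrict_inf d C D)"
proof -
  obtain Ls where "finite Ls" "\<forall>L\<in>Ls. linear_set_enat d L" "C = \<Union>Ls"
    using assms(1) unfolding semilinear_enat_def by blast
  then show ?thesis
    by (auto simp: restrict_inf_Union intro!: semilinear_nat_UN semilinear_nat_restrict_inf_linear)
qed

end
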